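(* Let $p,l$ be distinct odd primes and let $\Gamma=\psi(\tilde\Gamma)$ be the group described in the context. Then $\Gamma$ is commutative transitive: for all $a,b,c\in\Gamma\setminus\{1\}$, if $a$ commutes with $b$ and $b$ commutes with $c$, then $a$ commutes with $c$.
   Context: Let $p,l$ be distinct odd primes. Let $\mathbb H(\mathbb Z)$ be the ring of quaternions $x=x_0+x_1i+x_2j+x_3k$ with $x_0,\dots,x_3\in\mathbb Z$, where $i^2=j^2=k^2=-1$, $ij=-ji=k$; write $|x|^2=x_0^2+x_1^2+x_2^2+x_3^2$. Fix $c_p,d_p\in\mathbb Q_p$ with $c_p^2+d_p^2+1=0$ and $c_l,d_l\in\mathbb Q_l$ with $c_l^2+d_l^2+1=0$. Define $\psi:\mathbb H(\mathbb Z)\setminus\{0\}\to G:=PGL_2(\mathbb Q_p)\times PGL_2(\mathbb Q_l)$ by sending $x$ to the class of the pair $\left(\begin{pmatrix} x_0+x_1c_p+x_3d_p & -x_1d_p+x_2+x_3c_p\\ -x_1d_p-x_2+x_3c_p & x_0-x_1c_p-x_3d_p\end{pmatrix},\begin{pmatrix} x_0+x_1c_l+x_3d_l & -x_1d_l+x_2+x_3c_l\\ -x_1d_l-x_2+x_3c_l & x_0-x_1c_l-x_3d_l\end{pmatrix}\right)$. Let $\tilde\Gamma$ be the set of $x\in\mathbb H(\mathbb Z)$ such that $|x|^2=p^rl^s$ for some integers $r,s\ge 0$, and such that $x_0$ is odd and $x_1,x_2,x_3$ are even if $|x|^2\equiv 1\pmod 4$, while $x_1$ is even and $x_0,x_2,x_3$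 are odd if $|x|^2\equiv 3\pmod 4$. Then $\Gamma=\psi(\tilde\Gamma)$ is a torsion-free cocompact lattice in $G$. *)

theory Defs
  imports "HOL-Analysis.Analysis"
begin

text \<open>Integer quaternions x = x0 + x1 i + x2 j + x3 k, represented by their coordinates.\<close>
type_synonym hquat = "int \<times> int \<times> int \<times> int"

definition qnorm :: "hquat \<Rightarrow> int" where
  "qnorm x = (case x of (x0, x1, x2, x3) \<Rightarrow> x0^2 + x1^2 + x2^2 + x3^2)"

definition Gamma_tilde :: "nat \<Rightarrow> nat \<Rightarrow> hquat set" where
  "Gamma_tilde p l = {(x0, x1, x2, x3).
     (\<exists>r s. qnorm (x0, x1, x2, x3) = int p ^ r * int l ^ s) \<and>
     (qnorm (x0, x1, x2, x3) mod 4 = 1 \<longrightarrow> odd x0 \<and> even x1 \<and> even x2 \<and> even x3) \<and>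
     (qnorm (x0, x1, x2, x3) mod 4 = 3 \<longrightarrow> even x1 \<and> odd x0 \<and> odd x2 \<and> odd x3)}"

definition mat2 :: "'a::field \<Rightarrow> 'a \<Rightarrow> 'a \<Rightarrow> 'a \<Rightarrow> 'a^2^2" where
  "mat2 a b c d = (\<chi> i j. if i = 1 then (if j = 1 then a else b) else (if j = 1 then c else d))"

definition psi_comp :: "'a::field \<Rightarrow> 'a \<Rightarrow> hquat \<Rightarrow> 'a^2^2" where
  "psi_comp c d x = (case x of (x0, x1, x2, x3) \<Rightarrow>
     mat2 (of_int x0 + of_int x1 * c + of_int x3 * d)
          (- of_int x1 * d + of_int x2 + of_int x3 * c)
          (- of_int x1 * d - of_int x2 + of_int x3 * c)
          (of_int x0 - of_int x1 * c - of_int x3 * d))"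

text \<open>Equality of classes in PGL_2(K): the representatives differ by a nonzero scalar.\<close>
definition pgl_eq :: "'a::field^2^2 \<Rightarrow> 'a^2^2 \<Rightarrow> bool" where
  "pgl_eq A B \<longleftrightarrow> (\<exists>t. t \<noteq> 0 \<and> (\<forall>i j. A $ i $ j = t * B $ i $ j))"

text \<open>Elements of G = PGL_2(K_p) x PGL_2(K_l), given by pairs of representatives.\<close>
definition G_eq :: "(('a::field^2^2) \<times> ('b::field^2^2)) \<Rightarrow> (('a^2^2) \<times> ('b^2^2)) \<Rightarrow> bool" where
  "G_eq g h \<longleftrightarrow> pgl_eq (fst g) (fst h) \<and> pgl_eq (snd g) (snd h)"

definition G_mult :: "(('a::field^2^2) \<times> ('b::field^2^2)) \<Rightarrow> (('a^2^2) \<times> ('b^2^2)) \<Rightarrow> (('a^2^2) \<times> ('b^2^2))" where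
  "G_mult g h = (fst g ** fst h, snd g ** snd h)"

definition G_one :: "(('a::field^2^2) \<times> ('b::field^2^2))" where
  "G_one = (mat 1, mat 1)"

definition G_commute :: "(('a::field^2^2) \<times> ('b::field^2^2)) \<Rightarrow> (('a^2^2) \<times> ('b^2^2)) \<Rightarrow> bool" where
  "G_commute g h \<longleftrightarrow> G_eq (G_mult g h) (G_mult h g)"

definition psi :: "'a::field \<Rightarrow> 'a \<Rightarrow> 'b::field \<Rightarrow> 'b \<Rightarrow> hquat \<Rightarrow> (('a^2^2) \<times> ('b^2^2))" where
  "psi cp dp cl dl x = (psi_comp cp dp x, psi_comp cl dl x)"

end

theory Submission
  imports Defs
begin

text \<open>
  Since c^2 + d^2 + 1 = 0, each component of psi is multiplicative, so psi(x) and psi(y) commute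
  in PGL_2 iff xy = t yx for a scalar t. Comparing norms gives t = 1 or t = -1, and xy = -yx is
  impossible when both real parts are nonzero, as they are on Gamma-tilde (they are odd; this is
  all that is used of p and l). So commuting in Gamma means commuting as quaternions, i.e. having
  parallel vector parts, and being parallel to a fixed nonzero vector is transitive; elements with
  zero vector part are trivial in G.
\<close>

lemma mat2_nth [simp]:
  "mat2 a b c d $ 1 $ 1 = a" "mat2 a b c d $ 1 $ 2 = b"
  "mat2 a b c d $ 2 $ 1 = c" "mat2 a b c d $ 2 $ 2 = d"
  by (simp_all add: mat2_def)

lemma mat2_mult:
  "mat2 a b c d ** mat2 a' b' c' d' =
     mat2 (a*a' + b*c') (a*b' + b*d') (c*a' + d*c') (c*b' + d*d')"
  by (simp add: matrix_matrix_mult_def vec_eq_iff forall_2 sum_2)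

lemma mat2_eq_iff: "mat2 a b c d = mat2 a' b' c' d' \<longleftrightarrow> a = a' \<and> b = b' \<and> c = c' \<and> d = d'"
  by (auto simp: vec_eq_iff forall_2)

fun qmult :: "hquat \<Rightarrow> hquat \<Rightarrow> hquat" where
  "qmult (a0, a1, a2, a3) (b0, b1, b2, b3) =
     (a0*b0 - a1*b1 - a2*b2 - a3*b3,
      a0*b1 + a1*b0 + a2*b3 - a3*b2,
      a0*b2 - a1*b3 + a2*b0 + a3*b1,
      a0*b3 + a1*b2 - a2*b1 + a3*b0)"

lemma qnorm_qmult: "qnorm (qmult x y) = qnorm x * qnorm y"
proof -
  obtain x0 x1 x2 x3 y0 y1 y2 y3 where x: "x = (x0, x1, x2, x3)" and y: "y = (y0, y1, y2, y3)"
    by (metis prod.exhaust)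
  show ?thesis
    unfolding x y by (simp add: qnorm_def) algebra
qed

lemma qnorm_pos: "fst x \<noteq> 0 \<Longrightarrow> qnorm x > 0"
  by (cases x) (simp add: qnorm_def add_pos_nonneg)

lemma qmult_commute_iff:
  "qmult (x0, x1, x2, x3) (y0, y1, y2, y3) = qmult (y0, y1, y2, y3) (x0, x1, x2, x3) \<longleftrightarrow>
     x2*y3 = x3*y2 \<and> x3*y1 = x1*y3 \<and> x1*y2 = x2*y1"
  by (auto simp: algebra_simps)

text \<open>Both u and w are rational multiples of the nonzero vector g, with denominator |g|^2.\<close>
lemma cross_eq_zero_trans:
  fixes u1 u2 u3 g1 g2 g3 w1 w2 w3 :: int
  assumes "u2*g3 = u3*g2" "u3*g1 = u1*g3" "u1*g2 = u2*g1"
    and "g2*w3 = g3*w2" "g3*w1 = g1*w3" "g1*w2 = g2*w1"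
    and "(g1, g2, g3) \<noteq> 0"
  shows "u2*w3 = u3*w2 \<and> u3*w1 = u1*w3 \<and> u1*w2 = u2*w1"
proof -
  define n where "n = g1^2 + g2^2 + g3^2"
  define a where "a = u1*g1 + u2*g2 + u3*g3"
  define b where "b = w1*g1 + w2*g2 + w3*g3"
  have "n*u1 - a*g1 = g2*(u1*g2 - u2*g1) - g3*(u3*g1 - u1*g3)"
       "n*u2 - a*g2 = g3*(u2*g3 - u3*g2) - g1*(u1*g2 - u2*g1)"
       "n*u3 - a*g3 = g1*(u3*g1 - u1*g3) - g2*(u2*g3 - u3*g2)"
       "n*w1 - b*g1 = g3*(g3*w1 - g1*w3) - g2*(g1*w2 - g2*w1)"
       "n*w2 - b*g2 = g1*(g1*w2 - g2*w1) - g3*(g2*w3 - g3*w2)"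
       "n*w3 - b*g3 = g2*(g2*w3 - g3*w2) - g1*(g3*w1 - g1*w3)"
    unfolding n_def a_def b_def by (simp_all add: algebra_simps power2_eq_square)
  then have u: "n*u1 = a*g1" "n*u2 = a*g2" "n*u3 = a*g3"
    and w: "n*w1 = b*g1" "n*w2 = b*g2" "n*w3 = b*g3"
    using assms by simp_all
  have "n \<noteq> 0"
    using assms(7) unfolding n_def zero_prod_def by (simp add: add_nonneg_eq_0_iff)
  have "n*n*(u2*w3 - u3*w2) = (n*u2)*(n*w3) - (n*u3)*(n*w2)"
    and "n*n*(u3*w1 - u1*w3) = (n*u3)*(n*w1) - (n*u1)*(n*w3)"
    and "n*n*(u1*w2 - u2*w1) = (n*u1)*(n*w2) - (n*u2)*(n*w1)"
    by (simp_all add: algebra_simps)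
  with \<open>n \<noteq> 0\<close> show ?thesis
    unfolding u w by simp
qed

lemma qmult_commute_trans:
  assumes "qmult x y = qmult y x" and "qmult y z = qmult z y" and "snd y \<noteq> 0"
  shows "qmult x z = qmult z x"
proof -
  obtain x0 x1 x2 x3 y0 y1 y2 y3 z0 z1 z2 z3
    where x: "x = (x0, x1, x2, x3)" and y: "y = (y0, y1, y2, y3)" and z: "z = (z0, z1, z2, z3)"
    by (metis prod.exhaust)
  have "x2*y3 = x3*y2" "x3*y1 = x1*y3" "x1*y2 = x2*y1"
    using assms(1) unfolding x y qmult_commute_iff by simp_all
  moreover have "y2*z3 = y3*z2" "y3*z1 = y1*z3" "y1*z2 = y2*z1"
    using assms(2) unfolding y z qmult_commute_iff by simp_all
  moreover have "(y1, y2, y3) \<noteq> 0"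
    using assms(3) y by simp
  ultimately show ?thesis
    unfolding x z qmult_commute_iff by (rule cross_eq_zero_trans)
qed

text \<open>If xy = -yx, then y0 |x|^2 is a combination of the coordinates of xy + yx.\<close>
lemma qmult_not_anticommute:
  assumes "fst x \<noteq> 0" and "fst y \<noteq> 0"
  shows "qmult x y \<noteq> - qmult y x"
proof
  obtain x0 x1 x2 x3 y0 y1 y2 y3 where x: "x = (x0, x1, x2, x3)" and y: "y = (y0, y1, y2, y3)"
    by (metis prod.exhaust)
  assume "qmult x y = - qmult y x"
  then have "x0*y0 - (x1*y1 + x2*y2 + x3*y3) = 0"
    and "x0*y1 + x1*y0 = 0" "x0*y2 + x2*y0 = 0" "x0*y3 + x3*y0 = 0"
    by (simp_all add: x y algebra_simps)
  moreover have "y0 * qnorm x = x0*(x0*y0 - (x1*y1 + x2*y2 + x3*y3)) + x1*(x0*y1 + x1*y0)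
      + x2*(x0*y2 + x2*y0) + x3*(x0*y3 + x3*y0)"
    unfolding x qnorm_def by (simp add: algebra_simps power2_eq_square)
  ultimately have "y0 * qnorm x = 0"
    by simp
  with assms qnorm_pos[of x] show False
    by (simp add: y)
qed

lemma psi_comp_qmult:
  fixes c d :: "'a::field"
  assumes "c^2 + d^2 + 1 = 0"
  shows "psi_comp c d x ** psi_comp c d y = psi_comp c d (qmult x y)"
proof -
  obtain x0 x1 x2 x3 y0 y1 y2 y3 where x: "x = (x0, x1, x2, x3)" and y: "y = (y0, y1, y2, y3)"
    by (metis prod.exhaust)
  show ?thesis
    unfolding x y psi_comp_def
    by (simp add: mat2_mult mat2_eq_iff) (use assms in \<open>intro conjI; algebra\<close>)
qed

text \<open>
  Sums and differences of the diagonal and of the off-diagonal entries isolate q0 and q2, and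
  leave a linear system in q1 and q3 with determinant c^2 + d^2 = -1.
\<close>
lemma pgl_eq_psi_comp_proportional:
  fixes c d :: "'a::field_char_0"
  assumes cd: "c^2 + d^2 + 1 = 0"
    and "pgl_eq (psi_comp c d (q0, q1, q2, q3)) (psi_comp c d (r0, r1, r2, r3))"
  obtains t :: 'a where "t \<noteq> 0" "of_int q0 = t * of_int r0" "of_int q1 = t * of_int r1"
    "of_int q2 = t * of_int r2" "of_int q3 = t * of_int r3"
proof -
  obtain t where "t \<noteq> 0" and entries:
    "\<And>i j. psi_comp c d (q0, q1, q2, q3) $ i $ j = t * psi_comp c d (r0, r1, r2, r3) $ i $ j"
    using assms(2) unfolding pgl_eq_def by blast
  define A where "A = of_int q1 - t * of_int r1"
  define B where "B = of_int q3 - t * of_int r3"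
  have "2 * (of_int q0 :: 'a) = 2 * (t * of_int r0)" and "2 * (A * c + B * d) = 0"
    using entries[of 1 1] entries[of 2 2] unfolding A_def B_def
    by (simp_all add: psi_comp_def) algebra+
  moreover have "2 * (of_int q2 :: 'a) = 2 * (t * of_int r2)" and "2 * (B * c - A * d) = 0"
    using entries[of 1 2] entries[of 2 1] unfolding A_def B_def
    by (simp_all add: psi_comp_def) algebra+
  moreover have "(2::'a) \<noteq> 0"
    by simp
  ultimately have q0: "of_int q0 = t * of_int r0" and q2: "of_int q2 = t * of_int r2"
    and sys: "A * c + B * d = 0" "B * c - A * d = 0"
    by (simp_all only: mult_cancel_left mult_eq_0_iff simp_thms)
  have "A = d * (B * c - A * d) - c * (A * c + B * d)"
    and "B = - c * (B * c - A * d) - d * (A * c + B * d)"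
    using cd by algebra+
  then have "A = 0" and "B = 0"
    unfolding sys by simp_all
  then have q1: "of_int q1 = t * of_int r1" and q3: "of_int q3 = t * of_int r3"
    unfolding A_def B_def by simp_all
  show thesis
    by (rule that[OF \<open>t \<noteq> 0\<close> q0 q1 q2 q3])
qed

lemma pgl_eq_psi_comp_same_norm:
  fixes c d :: "'a::field_char_0"
  assumes "c^2 + d^2 + 1 = 0" and "qnorm q = qnorm r" and "qnorm r \<noteq> 0"
    and "pgl_eq (psi_comp c d q) (psi_comp c d r)"
  shows "q = r \<or> q = - r"
proof -
  obtain q0 q1 q2 q3 r0 r1 r2 r3 where q: "q = (q0, q1, q2, q3)" and r: "r = (r0, r1, r2, r3)"
    by (metis prod.exhaust)
  obtain t :: 'a where t: "of_int q0 = t * of_int r0" "of_int q1 = t * of_int r1"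
    "of_int q2 = t * of_int r2" "of_int q3 = t * of_int r3"
    using pgl_eq_psi_comp_proportional[OF assms(1) assms(4)[unfolded q r]] by blast
  have "of_int (qnorm r) = (of_int (qnorm q) :: 'a)"
    using assms(2) by simp
  also have "\<dots> = t^2 * of_int (qnorm r)"
    unfolding q r qnorm_def using t by (simp add: power_mult_distrib algebra_simps)
  finally have "t = 1 \<or> t = -1"
    using assms(3) by (simp add: power2_eq_1_iff)
  then show ?thesis
  proof
    assume "t = 1"
    then show ?thesis using t by (simp add: q r)
  next
    assume "t = -1"
    then have "q0 = - r0" "q1 = - r1" "q2 = - r2" "q3 = - r3"
      using t by (simp_all flip: of_int_minus)
    then show ?thesis by (simp add: q r)
  qed
qed

lemma pgl_commute_psi_comp_iff:
  fixes c d :: "'a::field_char_0"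
  assumes cd: "c^2 + d^2 + 1 = 0" and "fst x \<noteq> 0" and "fst y \<noteq> 0"
  shows "pgl_eq (psi_comp c d x ** psi_comp c d y) (psi_comp c d y ** psi_comp c d x) \<longleftrightarrow>
    qmult x y = qmult y x"
  unfolding psi_comp_qmult[OF cd]
proof
  assume "pgl_eq (psi_comp c d (qmult x y)) (psi_comp c d (qmult y x))"
  moreover have "qnorm (qmult x y) = qnorm (qmult y x)" "qnorm (qmult y x) \<noteq> 0"
    using qnorm_pos[of x] qnorm_pos[of y] assms(2,3) by (simp_all add: qnorm_qmult)
  ultimately show "qmult x y = qmult y x"
    using pgl_eq_psi_comp_same_norm[OF cd] qmult_not_anticommute[OF assms(2,3)] by blast
next
  assume "qmult x y = qmult y x"
  then show "pgl_eq (psi_comp c d (qmult x y)) (psi_comp c d (qmult y x))"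
    unfolding pgl_eq_def by (intro exI[of _ 1]) simp
qed

lemma G_commute_psi_iff:
  fixes cp dp :: "'a::field_char_0" and cl dl :: "'b::field_char_0"
  assumes "cp^2 + dp^2 + 1 = 0" and "cl^2 + dl^2 + 1 = 0" and "fst x \<noteq> 0" and "fst y \<noteq> 0"
  shows "G_commute (psi cp dp cl dl x) (psi cp dp cl dl y) \<longleftrightarrow> qmult x y = qmult y x"
  using pgl_commute_psi_comp_iff[OF assms(1,3,4)] pgl_commute_psi_comp_iff[OF assms(2,3,4)]
  by (simp add: G_commute_def G_eq_def G_mult_def psi_def)

lemma psi_eq_G_one_if_real:
  fixes cp dp :: "'a::field_char_0" and cl dl :: "'b::field_char_0"
  assumes "fst x \<noteq> 0" and "snd x = 0"
  shows "G_eq (psi cp dp cl dl x) G_one"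
proof -
  obtain x0 where "x = (x0, 0, 0, 0)" and "x0 \<noteq> 0"
    using assms by (cases x) (auto simp: zero_prod_def)
  then show ?thesis
    unfolding G_eq_def psi_def G_one_def pgl_eq_def
    by (auto intro!: exI[of _ "of_int x0"] simp: psi_comp_def forall_2 mat_def)
qed

lemma Gamma_tilde_odd_fst:
  assumes "odd p" and "odd l" and "x \<in> Gamma_tilde p l"
  shows "odd (fst x)"
proof -
  obtain x0 x1 x2 x3 where x: "x = (x0, x1, x2, x3)"
    by (metis prod.exhaust)
  from assms(3) obtain r s where "qnorm x = int p ^ r * int l ^ s"
    and "qnorm x mod 4 = 1 \<longrightarrow> odd x0" and "qnorm x mod 4 = 3 \<longrightarrow> odd x0"
    unfolding Gamma_tilde_def x by auto
  moreover from this(1) have "odd (qnorm x)"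
    using assms(1,2) by simp
  then have "qnorm x mod 4 = 1 \<or> qnorm x mod 4 = 3"
    by presburger
  ultimately show ?thesis
    using x by auto
qed

theorem proposition2p2:
  fixes p l :: nat
    and cp dp :: "'a::field_char_0"
    and cl dl :: "'b::field_char_0"
  assumes "prime p" and "prime l" and "odd p" and "odd l" and "p \<noteq> l"
    and "cp^2 + dp^2 + 1 = 0" and "cl^2 + dl^2 + 1 = 0"
  shows "\<forall>x\<in>Gamma_tilde p l. \<forall>y\<in>Gamma_tilde p l. \<forall>z\<in>Gamma_tilde p l.
           \<not> G_eq (psi cp dp cl dl x) G_one \<and> \<not> G_eq (psi cp dp cl dl y) G_one \<and>
           \<not> G_eq (psi cp dp cl dl z) G_one \<and>
           G_commute (psi cp dp cl dl x) (psi cp dp cl dl y) \<and>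
           G_commute (psi cp dp cl dl y) (psi cp dp cl dl z)
           \<longrightarrow> G_commute (psi cp dp cl dl x) (psi cp dp cl dl z)"
proof (intro ballI impI)
  fix x y z
  assume "x \<in> Gamma_tilde p l" "y \<in> Gamma_tilde p l" "z \<in> Gamma_tilde p l"
  then have real_parts: "fst x \<noteq> 0" "fst y \<noteq> 0" "fst z \<noteq> 0"
    using Gamma_tilde_odd_fst[OF assms(3,4)] by (metis dvd_0_right)+
  assume H: "\<not> G_eq (psi cp dp cl dl x) G_one \<and> \<not> G_eq (psi cp dp cl dl y) G_one \<and>
           \<not> G_eq (psi cp dp cl dl z) G_one \<and>
           G_commute (psi cp dp cl dl x) (psi cp dp cl dl y) \<and>
           G_commute (psi cp dp cl dl y) (psi cp dp cl dl z)"
  then have "snd y \<noteq> 0"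
    using psi_eq_G_one_if_real[OF real_parts(2)] by blast
  note commute_iff = G_commute_psi_iff[OF assms(6,7)]
  have "qmult x y = qmult y x" and "qmult y z = qmult z y"
    using H commute_iff[OF real_parts(1,2)] commute_iff[OF real_parts(2,3)] by simp_all
  then have "qmult x z = qmult z x"
    using \<open>snd y \<noteq> 0\<close> by (rule qmult_commute_trans)
  then show "G_commute (psi cp dp cl dl x) (psi cp dp cl dl z)"
    using commute_iff[OF real_parts(1,3)] by simp
qed

end
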